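(* Let $S$ be a $\Gamma$-hemiring, let $\mu$ be a fuzzy h-ideal of $S$ and let $x\in S$. Then: (i) $\mu\subseteq\langle x,\mu\rangle$; (ii) for every $\gamma\in\Gamma$ and every positive integer $n$, $\langle (x\gamma)^{n-1}x,\mu\rangle\subseteq\langle (x\gamma)^{n}x,\mu\rangle$; (iii) if $\mu(x)>0$, then $\operatorname{supp}\langle x,\mu\rangle=S$.
   Context: A $\Gamma$-hemiring is a pair of additive commutative semigroups with zero $S$ and $\Gamma$ with a map $S\times\Gamma\times S\to S$, $(a,\alpha,b)\mapsto a\alpha b$, such that for all $a,b,c\in S$, $\alpha,\beta\in\Gamma$: $(a+b)\alpha c=a\alpha c+b\alpha c$; $a\alpha(b+c)=a\alpha b+a\alpha c$; $a(\alpha+\beta)b=a\alpha b+a\beta b$; $a\alpha(b\beta c)=(a\alpha b)\beta c$; $0\alpha a=0=a\alpha0$; $a0b=0=b0a$. A fuzzy subset is a map $S\to[0,1]$; for fuzzy subsets, $\mu\subseteq\nu$ means $\mu(y)\le\nu(y)$ for all $y$, and $\operatorname{supp}\mu=\{s\in S:\mu(s)>0\}$. A fuzzy h-ideal of $S$ is a fuzzy subset $\mu$, not identically $0$, such that for all $x,y,a,b,z\in S$, $\gamma\in\Gamma$: $\mu(x+y)\ge\min\{\mu(x),\mu(y)\}$; $\mu(x\gamma y)\ge\max\{\mu(x),\mu(y)\}$ (i.e. both $\ge\mu(x)$ and $\ge\mu(y)$); and $x+a+z=b+z$ implies $\mu(x)\ge\min\{\mu(a),\mu(b)\}$. The extension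 of $\mu$ by $x$ is $\langle x,\mu\rangle(y)=\inf_{s\in S,\ \alpha,\gamma\in\Gamma}\mu(x\alpha s\gamma y)$. Here $(x\gamma)^0x=x$ and $(x\gamma)^{n}x=x\gamma x\gamma\cdots\gamma x$ with $n+1$ factors $x$. *)

theory Defs
  imports Main "HOL.Real"
begin

text \<open>A Gamma-hemiring: S and Gamma are the carrier types (additive commutative
  monoids, i.e. commutative semigroups with zero), tm a b c stands for a alpha b.\<close>

definition Gamma_hemiring :: "('s::comm_monoid_add \<Rightarrow> 'g::comm_monoid_add \<Rightarrow> 's \<Rightarrow> 's) \<Rightarrow> bool" where
  "Gamma_hemiring tm \<longleftrightarrow>
     (\<forall>a b c \<alpha>. tm (a + b) \<alpha> c = tm a \<alpha> c + tm b \<alpha> c) \<and>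
     (\<forall>a b c \<alpha>. tm a \<alpha> (b + c) = tm a \<alpha> b + tm a \<alpha> c) \<and>
     (\<forall>a b \<alpha> \<beta>. tm a (\<alpha> + \<beta>) b = tm a \<alpha> b + tm a \<beta> b) \<and>
     (\<forall>a b c \<alpha> \<beta>. tm a \<alpha> (tm b \<beta> c) = tm (tm a \<alpha> b) \<beta> c) \<and>
     (\<forall>a \<alpha>. tm 0 \<alpha> a = 0 \<and> tm a \<alpha> 0 = 0) \<and>
     (\<forall>a b. tm a 0 b = 0 \<and> tm b 0 a = 0)"

definition fuzzy_subset :: "('s \<Rightarrow> real) \<Rightarrow> bool" where
  "fuzzy_subset \<mu> \<longleftrightarrow> (\<forall>y. 0 \<le> \<mu> y \<and> \<mu> y \<le> 1)"

definition fuzzy_le :: "('s \<Rightarrow> real) \<Rightarrow> ('s \<Rightarrow> real) \<Rightarrow> bool" where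
  "fuzzy_le \<mu> \<nu> \<longleftrightarrow> (\<forall>y. \<mu> y \<le> \<nu> y)"

definition fsupp :: "('s \<Rightarrow> real) \<Rightarrow> 's set" where
  "fsupp \<mu> = {s. \<mu> s > 0}"

definition fuzzy_h_ideal :: "('s::comm_monoid_add \<Rightarrow> 'g::comm_monoid_add \<Rightarrow> 's \<Rightarrow> 's) \<Rightarrow> ('s \<Rightarrow> real) \<Rightarrow> bool" where
  "fuzzy_h_ideal tm \<mu> \<longleftrightarrow>
     fuzzy_subset \<mu> \<and> (\<exists>y. \<mu> y \<noteq> 0) \<and>
     (\<forall>x y. \<mu> (x + y) \<ge> min (\<mu> x) (\<mu> y)) \<and>
     (\<forall>x y \<gamma>. \<mu> (tm x \<gamma> y) \<ge> max (\<mu> x) (\<mu> y)) \<and>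
     (\<forall>x a b z. x + a + z = b + z \<longrightarrow> \<mu> x \<ge> min (\<mu> a) (\<mu> b))"

definition fuzzy_ext :: "('s \<Rightarrow> 'g \<Rightarrow> 's \<Rightarrow> 's) \<Rightarrow> 's \<Rightarrow> ('s \<Rightarrow> real) \<Rightarrow> 's \<Rightarrow> real" where
  "fuzzy_ext tm x \<mu> y = (INF p\<in>(UNIV :: ('s \<times> 'g \<times> 'g) set).
      (case p of (s, \<alpha>, \<gamma>) \<Rightarrow> \<mu> (tm (tm x \<alpha> s) \<gamma> y)))"

text \<open>gpow tm x g n = (x g)^n x, i.e. x g x g ... g x with n+1 factors x.\<close>
fun gpow :: "('s \<Rightarrow> 'g \<Rightarrow> 's \<Rightarrow> 's) \<Rightarrow> 's \<Rightarrow> 'g \<Rightarrow> nat \<Rightarrow> 's" where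
  "gpow tm x g 0 = x"
| "gpow tm x g (Suc n) = tm (gpow tm x g n) g x"

end

theory Submission
  imports Defs
begin

text \<open>All three parts come from the absorption law \<open>\<mu> a, \<mu> b \<le> \<mu> (a \<gamma> b)\<close> of a fuzzy
  h-ideal: every term \<open>x \<alpha> s \<gamma> y\<close> of the infimum defining \<open>\<langle>x,\<mu>\<rangle>(y)\<close> dominates both
  \<open>\<mu> x\<close> and \<open>\<mu> y\<close>, giving (i) and (iii). For (ii), associativity rewrites
  \<open>((x\<gamma>)\<^sup>n x) \<alpha> s \<beta> y\<close> as \<open>((x\<gamma>)\<^sup>n\<^sup>-\<^sup>1 x) \<gamma> (x \<alpha> s) \<beta> y\<close>, so the infimum for \<open>(x\<gamma>)\<^sup>n x\<close>
  ranges over a subfamily of the one for \<open>(x\<gamma>)\<^sup>n\<^sup>-\<^sup>1 x\<close>.\<close>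

lemma fuzzy_ext_lower:
  assumes "fuzzy_subset \<mu>"
  shows "fuzzy_ext tm a \<mu> y \<le> \<mu> (tm (tm a \<alpha> s) \<gamma> y)"
proof -
  have "bdd_below (range (\<lambda>(s, \<alpha>, \<gamma>). \<mu> (tm (tm a \<alpha> s) \<gamma> y)))"
    using assms unfolding fuzzy_subset_def by (intro bdd_belowI[where m = 0]) auto
  from cINF_lower[OF this, of "(s, \<alpha>, \<gamma>)"] show ?thesis
    unfolding fuzzy_ext_def by simp
qed

lemma fuzzy_ext_greatest:
  assumes "\<And>s \<alpha> \<gamma>. c \<le> \<mu> (tm (tm a \<alpha> s) \<gamma> y)"
  shows "c \<le> fuzzy_ext tm a \<mu> y"
  unfolding fuzzy_ext_def by (rule cINF_greatest) (auto simp: assms)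

lemma fuzzy_h_ideal_subset: "fuzzy_h_ideal tm \<mu> \<Longrightarrow> fuzzy_subset \<mu>"
  unfolding fuzzy_h_ideal_def by blast

lemma fuzzy_h_ideal_mult_left:
  "fuzzy_h_ideal tm \<mu> \<Longrightarrow> \<mu> a \<le> \<mu> (tm a \<gamma> b)"
  unfolding fuzzy_h_ideal_def by (meson max.bounded_iff)

lemma fuzzy_h_ideal_mult_right:
  "fuzzy_h_ideal tm \<mu> \<Longrightarrow> \<mu> b \<le> \<mu> (tm a \<gamma> b)"
  unfolding fuzzy_h_ideal_def by (meson max.bounded_iff)

lemma Gamma_hemiring_assoc:
  "Gamma_hemiring tm \<Longrightarrow> tm a \<alpha> (tm b \<beta> c) = tm (tm a \<alpha> b) \<beta> c"
  unfolding Gamma_hemiring_def by blast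

lemma fuzzy_h_ideal_le_fuzzy_ext:
  assumes "fuzzy_h_ideal tm \<mu>"
  shows "fuzzy_le \<mu> (fuzzy_ext tm a \<mu>)"
  unfolding fuzzy_le_def
  by (auto intro!: fuzzy_ext_greatest fuzzy_h_ideal_mult_right[OF assms])

lemma fuzzy_h_ideal_le_fuzzy_ext_self:
  assumes "fuzzy_h_ideal tm \<mu>"
  shows "\<mu> a \<le> fuzzy_ext tm a \<mu> y"
  using fuzzy_h_ideal_mult_left[OF assms]
  by (intro fuzzy_ext_greatest) (meson order_trans)

lemma fuzzy_ext_mono_mult:
  assumes "Gamma_hemiring tm" and "fuzzy_subset \<mu>"
  shows "fuzzy_le (fuzzy_ext tm a \<mu>) (fuzzy_ext tm (tm a \<gamma> b) \<mu>)"
  unfolding fuzzy_le_def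
proof (intro allI fuzzy_ext_greatest)
  fix y s \<alpha> \<beta>
  have "tm (tm a \<gamma> b) \<alpha> s = tm a \<gamma> (tm b \<alpha> s)"
    by (simp add: Gamma_hemiring_assoc[OF assms(1)])
  then show "fuzzy_ext tm a \<mu> y \<le> \<mu> (tm (tm (tm a \<gamma> b) \<alpha> s) \<beta> y)"
    using fuzzy_ext_lower[OF assms(2)] by simp
qed

lemma fsupp_fuzzy_ext:
  assumes "fuzzy_h_ideal tm \<mu>" and "\<mu> a > 0"
  shows "fsupp (fuzzy_ext tm a \<mu>) = UNIV"
  using fuzzy_h_ideal_le_fuzzy_ext_self[OF assms(1)] assms(2)
  unfolding fsupp_def by (auto intro: less_le_trans)

theorem proposition3p7:
  fixes tm :: "'s::comm_monoid_add \<Rightarrow> 'g::comm_monoid_add \<Rightarrow> 's \<Rightarrow> 's"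
    and \<mu> :: "'s \<Rightarrow> real" and x :: 's
  assumes "Gamma_hemiring tm"
    and "fuzzy_h_ideal tm \<mu>"
  shows "fuzzy_le \<mu> (fuzzy_ext tm x \<mu>) \<and>
         (\<forall>\<gamma>. \<forall>n::nat. n \<ge> 1 \<longrightarrow>
           fuzzy_le (fuzzy_ext tm (gpow tm x \<gamma> (n - 1)) \<mu>) (fuzzy_ext tm (gpow tm x \<gamma> n) \<mu>)) \<and>
         (\<mu> x > 0 \<longrightarrow> fsupp (fuzzy_ext tm x \<mu>) = UNIV)"
proof (intro conjI allI impI)
  show "fuzzy_le \<mu> (fuzzy_ext tm x \<mu>)"
    using assms(2) by (rule fuzzy_h_ideal_le_fuzzy_ext)
next
  fix \<gamma> and n :: nat
  assume "n \<ge> 1"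
  then obtain m where "n = Suc m" by (cases n) auto
  then show "fuzzy_le (fuzzy_ext tm (gpow tm x \<gamma> (n - 1)) \<mu>) (fuzzy_ext tm (gpow tm x \<gamma> n) \<mu>)"
    using fuzzy_ext_mono_mult[OF assms(1) fuzzy_h_ideal_subset[OF assms(2)]] by simp
next
  assume "\<mu> x > 0"
  with assms(2) show "fsupp (fuzzy_ext tm x \<mu>) = UNIV"
    by (rule fsupp_fuzzy_ext)
qed

end
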